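(* Let $H$ be a binary tree based graph and $Z$ a uniform read-$d$-times NBP computing $\phi_H$. Let $X\subseteq V(Z)$ separate subsets $Y_1,Y_2$ of ${\bf Roots}(H)$, and let $M$ be a pseudomatching of $H$ between $Y_1$ and $Y_2$. Then for every assignment $S$ (set of literals) to all variables of $V(H)\setminus\bigcup M$ there is $\varphi\in{\bf CNF}(M)$ such that for every computational path $P$ of $Z$ passing through all vertices of $X$ with $S\subseteq A(P)$, the assignment $A(P)$ satisfies $\varphi$.
   Context: A rooted tree is extended if none of its leaves has a sibling. A graph $H$ is a binary tree based graph if it is the edge-disjoint union of extended rooted trees $T_1,\dots,T_m$ with roots $t_1,\dots,t_m$ (forming ${\bf Roots}(H)$) such that every leaf of some $T_i$ is a leaf of exactly two of the trees, and any two trees have at most one common vertex, which is a leaf of both. $T_i,T_j$ are adjacent if they share a leaf $\ell_{i,j}$; $P_{i,j}$ is the path between $t_i$ and $t_j$ in $T_i\cup T_j$; $P^{1/2}_{i\to j}$ is the path in $T_i$ from $t_i$ to $\ell_{i,j}$. A pseudoedge is a pair $\{t_i,t_j\}$ with $T_i,T_j$ adjacent; a pseudomatching is a set of pairwise disjoint pseudoedges, between disjoint $U,V$ if each has one end in each; $\bigcup M$ is the set of ends of pseudoedges of $M$. $\phi_H$ is the CNF on variables $V(H)$ with a clause $C_{i,j}$ (positive literals of $V(P_{i,j})$) for each pseudoedge. ${\bf CNF}(M)$ is the set of CNFs consisting, for each $\{t_i,t_j\}\in M$, of one clause that is either the disjunction of positive literals of $V(P^{1/2}_{i\to j})$ or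 of $V(P^{1/2}_{j\to i})$. An NBP $Z$ is a directed acyclic multigraph with one source and one sink, some edges labelled with literals. A source-sink path is computational if no variable occurs on it with both signs; $A(P)$ is its set of literals. $Z$ computes the function whose satisfying assignments are the total assignments $S$ with $A(P)\subseteq S$ for some computational path $P$. Read-$d$-times: each variable labels at most $d$ edges of each source-sink path; uniform: exactly $d$. A partition of a path $P$ is a sequence $P_1,\dots,P_c$ of subpaths with $P_1$ a prefix, $P_c$ a suffix, and the first vertex of $P_i$ equal to the last vertex of $P_{i-1}$; the set $X$ of the ends of $P_1,\dots,P_{c-1}$ generates it. $X\subseteq V(Z)$ not containing source or sink separates disjoint variable sets $Y_1,Y_2$ if there is a computational path $P$ through all vertices of $X$ such that in the partition $P_1,\dots,P_{|X|+1}$ generated by $X$ on $P$, either variables of $Y_1$ label edges only of odd-indexed $P_i$ and variables of $Y_2$ only of even-indexed $P_i$, or vice versa. *)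

theory Defs
  imports Main
begin

type_synonym 'v lit = "'v \<times> bool"

definition rooted_tree :: "'v set \<Rightarrow> ('v \<times> 'v) set \<Rightarrow> 'v \<Rightarrow> bool" where
  "rooted_tree V E r \<longleftrightarrow> finite V \<and> r \<in> V \<and> E \<subseteq> V \<times> V
     \<and> (\<forall>v\<in>V. (r, v) \<in> E\<^sup>*) \<and> (\<forall>v. (v, r) \<notin> E)
     \<and> (\<forall>v\<in>V - {r}. \<exists>!u. (u, v) \<in> E)"

definition tree_leaves :: "'v set \<Rightarrow> ('v \<times> 'v) set \<Rightarrow> 'v \<Rightarrow> 'v set" where
  "tree_leaves V E r = {v \<in> V. v \<noteq> r \<and> (\<forall>w. (v, w) \<notin> E)}"

definition extended_tree :: "'v set \<Rightarrow> ('v \<times> 'v) set \<Rightarrow> 'v \<Rightarrow> bool" where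
  "extended_tree V E r \<longleftrightarrow> rooted_tree V E r \<and>
     (\<forall>l\<in>tree_leaves V E r. \<not> (\<exists>s u. s \<noteq> l \<and> (u, l) \<in> E \<and> (u, s) \<in> E))"

record ('i, 'v) tbg =
  tidx :: "'i set"
  tverts :: "'i \<Rightarrow> 'v set"
  tedges :: "'i \<Rightarrow> ('v \<times> 'v) set"
  troot :: "'i \<Rightarrow> 'v"

definition lvs :: "('i, 'v) tbg \<Rightarrow> 'i \<Rightarrow> 'v set" where
  "lvs H i = tree_leaves (tverts H i) (tedges H i) (troot H i)"

definition binary_tree_based :: "('i, 'v) tbg \<Rightarrow> bool" where
  "binary_tree_based H \<longleftrightarrow> finite (tidx H)
   \<and> (\<forall>i\<in>tidx H. extended_tree (tverts H i) (tedges H i) (troot H i))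
   \<and> (\<forall>i\<in>tidx H. \<forall>j\<in>tidx H. i \<noteq> j \<longrightarrow>
        (\<forall>(a, b)\<in>tedges H i. (a, b) \<notin> tedges H j \<and> (b, a) \<notin> tedges H j))
   \<and> (\<forall>i\<in>tidx H. \<forall>l\<in>lvs H i. card {j \<in> tidx H. l \<in> lvs H j} = 2)
   \<and> (\<forall>i\<in>tidx H. \<forall>j\<in>tidx H. i \<noteq> j \<longrightarrow>
        card (tverts H i \<inter> tverts H j) \<le> 1 \<and>
        tverts H i \<inter> tverts H j \<subseteq> lvs H i \<inter> lvs H j)"

definition HV :: "('i, 'v) tbg \<Rightarrow> 'v set" where
  "HV H = (\<Union>i\<in>tidx H. tverts H i)"

definition Roots :: "('i, 'v) tbg \<Rightarrow> 'v set" where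
  "Roots H = troot H ` tidx H"

definition adjacent :: "('i, 'v) tbg \<Rightarrow> 'i \<Rightarrow> 'i \<Rightarrow> bool" where
  "adjacent H i j \<longleftrightarrow> i \<in> tidx H \<and> j \<in> tidx H \<and> i \<noteq> j \<and> lvs H i \<inter> lvs H j \<noteq> {}"

definition shared_leaf :: "('i, 'v) tbg \<Rightarrow> 'i \<Rightarrow> 'i \<Rightarrow> 'v" where
  "shared_leaf H i j = (THE l. l \<in> lvs H i \<inter> lvs H j)"

text \<open>Vertex set of \<open>P^{1/2}_{i\<rightarrow>j}\<close>: the path in \<open>T_i\<close> from \<open>t_i\<close> to \<open>\<ell>_{i,j}\<close>,
  i.e. the ancestors (inclusive) of the shared leaf in \<open>T_i\<close>.\<close>
definition half_path :: "('i, 'v) tbg \<Rightarrow> 'i \<Rightarrow> 'i \<Rightarrow> 'v set" where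
  "half_path H i j = {u. (u, shared_leaf H i j) \<in> (tedges H i)\<^sup>*}"

text \<open>Vertex set of \<open>P_{i,j}\<close>, the path between \<open>t_i\<close> and \<open>t_j\<close> in \<open>T_i \<union> T_j\<close>
  (the concatenation of the two half paths at the shared leaf).\<close>
definition full_path :: "('i, 'v) tbg \<Rightarrow> 'i \<Rightarrow> 'i \<Rightarrow> 'v set" where
  "full_path H i j = half_path H i j \<union> half_path H j i"

definition pseudoedge :: "('i, 'v) tbg \<Rightarrow> 'v set \<Rightarrow> bool" where
  "pseudoedge H e \<longleftrightarrow> (\<exists>i j. adjacent H i j \<and> e = {troot H i, troot H j})"

definition pseudomatching_between :: "('i, 'v) tbg \<Rightarrow> 'v set set \<Rightarrow> 'v set \<Rightarrow> 'v set \<Rightarrow> bool" where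
  "pseudomatching_between H M U W \<longleftrightarrow>
     (\<forall>e\<in>M. pseudoedge H e) \<and> (\<forall>e\<in>M. \<forall>e'\<in>M. e \<noteq> e' \<longrightarrow> e \<inter> e' = {})
     \<and> (\<forall>e\<in>M. card (e \<inter> U) = 1 \<and> card (e \<inter> W) = 1)"

definition pos_clause :: "'v set \<Rightarrow> 'v lit set" where
  "pos_clause A = {(v, True) | v. v \<in> A}"

definition phi_H :: "('i, 'v) tbg \<Rightarrow> 'v lit set set" where
  "phi_H H = {pos_clause (full_path H i j) | i j. adjacent H i j}"

definition tree_of_root :: "('i, 'v) tbg \<Rightarrow> 'v \<Rightarrow> 'i" where
  "tree_of_root H t = (THE i. i \<in> tidx H \<and> troot H i = t)"

text \<open>The clause for pseudoedge \<open>e = {t_i, t_j}\<close> choosing end \<open>t = t_i\<close>: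
  positive literals of \<open>V(P^{1/2}_{i\<rightarrow>j})\<close>.\<close>
definition half_clause :: "('i, 'v) tbg \<Rightarrow> 'v set \<Rightarrow> 'v \<Rightarrow> 'v lit set" where
  "half_clause H e t = pos_clause
     (half_path H (tree_of_root H t) (tree_of_root H (the_elem (e - {t}))))"

definition CNF_M :: "('i, 'v) tbg \<Rightarrow> 'v set set \<Rightarrow> 'v lit set set set" where
  "CNF_M H M = {(\<lambda>e. half_clause H e (c e)) ` M | c. \<forall>e\<in>M. c e \<in> e}"

definition satisfies :: "'v lit set \<Rightarrow> 'v lit set set \<Rightarrow> bool" where
  "satisfies S \<phi> \<longleftrightarrow> (\<forall>C\<in>\<phi>. C \<inter> S \<noteq> {})"

definition total_assignment :: "'v set \<Rightarrow> 'v lit set \<Rightarrow> bool" where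
  "total_assignment Var S \<longleftrightarrow> S \<subseteq> Var \<times> UNIV \<and> (\<forall>x\<in>Var. (x, True) \<in> S \<longleftrightarrow> (x, False) \<notin> S)"

record ('n, 'e, 'v) nbp =
  nodes :: "'n set"
  edges :: "'e set"
  etail :: "'e \<Rightarrow> 'n"
  ehead :: "'e \<Rightarrow> 'n"
  elab :: "'e \<Rightarrow> 'v lit option"
  src :: 'n
  snk :: 'n

definition is_walk :: "('n, 'e, 'v) nbp \<Rightarrow> 'e list \<Rightarrow> bool" where
  "is_walk Z P \<longleftrightarrow> set P \<subseteq> edges Z \<and>
     (\<forall>k. Suc k < length P \<longrightarrow> ehead Z (P ! k) = etail Z (P ! Suc k))"

definition is_nbp :: "('n, 'e, 'v) nbp \<Rightarrow> 'v set \<Rightarrow> bool" where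
  "is_nbp Z Var \<longleftrightarrow> finite (nodes Z) \<and> finite (edges Z)
   \<and> (\<forall>e\<in>edges Z. etail Z e \<in> nodes Z \<and> ehead Z e \<in> nodes Z)
   \<and> (\<forall>P. is_walk Z P \<and> P \<noteq> [] \<longrightarrow> etail Z (hd P) \<noteq> ehead Z (last P))
   \<and> src Z \<in> nodes Z \<and> snk Z \<in> nodes Z
   \<and> (\<forall>v\<in>nodes Z. (\<not> (\<exists>e\<in>edges Z. ehead Z e = v)) \<longleftrightarrow> v = src Z)
   \<and> (\<forall>v\<in>nodes Z. (\<not> (\<exists>e\<in>edges Z. etail Z e = v)) \<longleftrightarrow> v = snk Z)
   \<and> (\<forall>e\<in>edges Z. \<forall>l. elab Z e = Some l \<longrightarrow> fst l \<in> Var)"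

definition ss_path :: "('n, 'e, 'v) nbp \<Rightarrow> 'e list \<Rightarrow> bool" where
  "ss_path Z P \<longleftrightarrow> is_walk Z P \<and>
     (if P = [] then src Z = snk Z
      else etail Z (hd P) = src Z \<and> ehead Z (last P) = snk Z)"

definition path_verts :: "('n, 'e, 'v) nbp \<Rightarrow> 'e list \<Rightarrow> 'n set" where
  "path_verts Z P = insert (src Z) (ehead Z ` set P)"

definition A :: "('n, 'e, 'v) nbp \<Rightarrow> 'e list \<Rightarrow> 'v lit set" where
  "A Z P = {l. \<exists>e\<in>set P. elab Z e = Some l}"

definition computational :: "('n, 'e, 'v) nbp \<Rightarrow> 'e list \<Rightarrow> bool" where
  "computational Z P \<longleftrightarrow> ss_path Z P \<and> \<not> (\<exists>x. (x, True) \<in> A Z P \<and> (x, False) \<in> A Z P)"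

definition computes :: "('n, 'e, 'v) nbp \<Rightarrow> 'v set \<Rightarrow> ('v lit set \<Rightarrow> bool) \<Rightarrow> bool" where
  "computes Z Var F \<longleftrightarrow>
     (\<forall>S. total_assignment Var S \<longrightarrow> (F S \<longleftrightarrow> (\<exists>P. computational Z P \<and> A Z P \<subseteq> S)))"

definition uniform_read :: "('n, 'e, 'v) nbp \<Rightarrow> 'v set \<Rightarrow> nat \<Rightarrow> bool" where
  "uniform_read Z Var d \<longleftrightarrow> (\<forall>P. ss_path Z P \<longrightarrow>
     (\<forall>x\<in>Var. length (filter (\<lambda>e. \<exists>b. elab Z e = Some (x, b)) P) = d))"

text \<open>Partition of path \<open>P\<close> generated by \<open>X\<close>: \<open>Ps ! k\<close> is \<open>P_{k+1}\<close>.\<close>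
definition gen_partition :: "('n, 'e, 'v) nbp \<Rightarrow> 'e list \<Rightarrow> 'n set \<Rightarrow> 'e list list \<Rightarrow> bool" where
  "gen_partition Z P X Ps \<longleftrightarrow> finite X \<and> concat Ps = P \<and> length Ps = card X + 1
     \<and> (\<forall>Q\<in>set Ps. Q \<noteq> [])
     \<and> X = {ehead Z (last (Ps ! k)) | k. k < card X}"

text \<open>Variables of \<open>Y1\<close> only on odd-indexed parts (1-based), i.e. even 0-based positions,
  and variables of \<open>Y2\<close> only on even-indexed parts.\<close>
definition alternates :: "('n, 'e, 'v) nbp \<Rightarrow> 'e list list \<Rightarrow> 'v set \<Rightarrow> 'v set \<Rightarrow> bool" where
  "alternates Z Ps Y1 Y2 \<longleftrightarrow> (\<forall>k < length Ps. \<forall>e\<in>set (Ps ! k). \<forall>x b.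
      elab Z e = Some (x, b) \<longrightarrow> (x \<in> Y1 \<longrightarrow> even k) \<and> (x \<in> Y2 \<longrightarrow> odd k))"

definition separates :: "('n, 'e, 'v) nbp \<Rightarrow> 'n set \<Rightarrow> 'v set \<Rightarrow> 'v set \<Rightarrow> bool" where
  "separates Z X Y1 Y2 \<longleftrightarrow> X \<subseteq> nodes Z \<and> src Z \<notin> X \<and> snk Z \<notin> X \<and>
     (\<exists>P Ps. computational Z P \<and> X \<subseteq> path_verts Z P \<and> gen_partition Z P X Ps
        \<and> (alternates Z Ps Y1 Y2 \<or> alternates Z Ps Y2 Y1))"

end

theory Submission
  imports Defs
begin

text \<open>If no clause of \<open>CNF(M)\<close> works for \<open>S\<close>, some pseudoedge \<open>{t\<^sub>i, t\<^sub>j}\<close> admits paths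
  \<open>P\<^sub>1\<close>, \<open>P\<^sub>2\<close> through \<open>X\<close> extending \<open>S\<close> such that \<open>P\<^sub>1\<close> sets no variable of
  \<open>P\<^sup>1\<^sup>/\<^sup>2\<^sub>i\<^sub>\<rightarrow>\<^sub>j\<close> true and \<open>P\<^sub>2\<close> none of \<open>P\<^sup>1\<^sup>/\<^sup>2\<^sub>j\<^sub>\<rightarrow>\<^sub>i\<close>.
  By acyclicity both paths meet the vertices of \<open>X\<close> in the order of the separating path, and by
  uniformity of the read count the cut pieces inherit its alternation: \<open>Y\<^sub>1\<close>-variables are read
  only on odd pieces, \<open>Y\<^sub>2\<close>-variables only on even ones. Gluing the odd pieces of \<open>P\<^sub>1\<close> to
  the even pieces of \<open>P\<^sub>2\<close> gives a path that is computational, since both paths agree with \<open>S\<close>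
  outside \<open>Y\<^sub>1 \<union> Y\<^sub>2\<close>. It must satisfy the clause \<open>C\<^sub>i\<^sub>,\<^sub>j\<close>, but a true variable of
  \<open>P\<^sub>i\<^sub>,\<^sub>j\<close> on it is \<open>t\<^sub>i\<close> (read as on \<open>P\<^sub>1\<close>), \<open>t\<^sub>j\<close> (read as on \<open>P\<^sub>2\<close>) or fixed by \<open>S\<close>,
  and each case contradicts the choice of \<open>P\<^sub>1\<close>, \<open>P\<^sub>2\<close>.\<close>

lemma is_walk_Nil [simp]: "is_walk Z []"
  by (simp add: is_walk_def)

lemma is_walk_Cons:
  "is_walk Z (e # P) \<longleftrightarrow> e \<in> edges Z \<and> is_walk Z P \<and> (P \<noteq> [] \<longrightarrow> ehead Z e = etail Z (hd P))"
proof
  assume w: "is_walk Z (e # P)"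
  have "ehead Z (P ! k) = etail Z (P ! Suc k)" if "Suc k < length P" for k
    using w that unfolding is_walk_def by (metis Suc_less_eq length_Cons nth_Cons_Suc)
  moreover have "P \<noteq> [] \<longrightarrow> ehead Z e = etail Z (hd P)"
    using w unfolding is_walk_def
    by (metis hd_conv_nth length_Cons length_greater_0_conv nth_Cons_0 nth_Cons_Suc Suc_less_eq)
  ultimately show "e \<in> edges Z \<and> is_walk Z P \<and> (P \<noteq> [] \<longrightarrow> ehead Z e = etail Z (hd P))"
    using w unfolding is_walk_def by auto
next
  assume r: "e \<in> edges Z \<and> is_walk Z P \<and> (P \<noteq> [] \<longrightarrow> ehead Z e = etail Z (hd P))"
  show "is_walk Z (e # P)"
    unfolding is_walk_def
  proof (intro conjI allI impI)
    show "set (e # P) \<subseteq> edges Z" using r by (auto simp: is_walk_def)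
    fix k assume k: "Suc k < length (e # P)"
    then show "ehead Z ((e # P) ! k) = etail Z ((e # P) ! Suc k)"
      using r by (cases k) (auto simp: is_walk_def hd_conv_nth)
  qed
qed

lemma is_walk_append:
  "is_walk Z (xs @ ys) \<longleftrightarrow> is_walk Z xs \<and> is_walk Z ys \<and>
     (xs \<noteq> [] \<longrightarrow> ys \<noteq> [] \<longrightarrow> ehead Z (last xs) = etail Z (hd ys))"
  by (induction xs) (auto simp: is_walk_Cons)

lemma is_walk_take: "is_walk Z P \<Longrightarrow> is_walk Z (take n P)"
  by (metis append_take_drop_id is_walk_append)

lemma is_walk_drop: "is_walk Z P \<Longrightarrow> is_walk Z (drop n P)"
  by (metis append_take_drop_id is_walk_append)

lemma is_walk_concat:
  assumes "\<forall>Q\<in>set Ls. Q \<noteq> []"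
  shows "is_walk Z (concat Ls) \<longleftrightarrow> (\<forall>Q\<in>set Ls. is_walk Z Q) \<and>
     (\<forall>k. Suc k < length Ls \<longrightarrow> ehead Z (last (Ls ! k)) = etail Z (hd (Ls ! Suc k)))"
  using assms
proof (induction Ls)
  case Nil
  then show ?case by simp
next
  case (Cons L Ls)
  have hd: "Ls \<noteq> [] \<Longrightarrow> hd (concat Ls) = hd (Ls ! 0)" and ne: "Ls \<noteq> [] \<Longrightarrow> concat Ls \<noteq> []"
    using Cons.prems by (cases Ls; auto)+
  have "is_walk Z (concat (L # Ls)) \<longleftrightarrow> is_walk Z L \<and> is_walk Z (concat Ls) \<and>
      (Ls \<noteq> [] \<longrightarrow> ehead Z (last L) = etail Z (hd (Ls ! 0)))"
    using Cons.prems hd ne by (auto simp: is_walk_append)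
  also have "\<dots> \<longleftrightarrow> (\<forall>Q\<in>set (L # Ls). is_walk Z Q) \<and>
      (\<forall>k. Suc k < length (L # Ls) \<longrightarrow> ehead Z (last ((L # Ls) ! k)) = etail Z (hd ((L # Ls) ! Suc k)))"
    using Cons by (auto simp: less_Suc_eq_0_disj nth_Cons split: nat.split)
  finally show ?case .
qed

lemma last_concat_nonempty:
  "\<forall>Q\<in>set Ls. Q \<noteq> [] \<Longrightarrow> Ls \<noteq> [] \<Longrightarrow> last (concat Ls) = last (Ls ! (length Ls - 1))"
  by (induction Ls) (auto simp: nth_Cons')

lemma hd_concat_nonempty: "\<forall>Q\<in>set Ls. Q \<noteq> [] \<Longrightarrow> Ls \<noteq> [] \<Longrightarrow> hd (concat Ls) = hd (Ls ! 0)"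
  by (cases Ls) auto

definition reaches :: "('n, 'e, 'v) nbp \<Rightarrow> 'n \<Rightarrow> 'n \<Rightarrow> bool" where
  "reaches Z u w \<longleftrightarrow> (\<exists>W. is_walk Z W \<and> W \<noteq> [] \<and> etail Z (hd W) = u \<and> ehead Z (last W) = w)"

lemma reaches_irrefl: "is_nbp Z V \<Longrightarrow> \<not> reaches Z u u"
  unfolding is_nbp_def reaches_def by metis

lemma reaches_trans: "reaches Z u w \<Longrightarrow> reaches Z w x \<Longrightarrow> reaches Z u x"
  unfolding reaches_def
proof (elim exE conjE)
  fix W1 W2
  assume "is_walk Z W1" "W1 \<noteq> []" "etail Z (hd W1) = u" "ehead Z (last W1) = w"
    "is_walk Z W2" "W2 \<noteq> []" "etail Z (hd W2) = w" "ehead Z (last W2) = x"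
  then show "\<exists>W. is_walk Z W \<and> W \<noteq> [] \<and> etail Z (hd W) = u \<and> ehead Z (last W) = x"
    by (intro exI[of _ "W1 @ W2"]) (auto simp: is_walk_append)
qed

lemma reaches_nth:
  assumes "is_walk Z P" "i < j" "j < length P"
  shows "reaches Z (ehead Z (P ! i)) (ehead Z (P ! j))"
proof -
  let ?W = "drop (Suc i) (take (Suc j) P)"
  have "is_walk Z ?W" using assms by (intro is_walk_drop is_walk_take)
  moreover have "hd ?W = P ! Suc i" "last ?W = P ! j" "?W \<noteq> []"
    using assms by (simp_all add: hd_drop_conv_nth last_conv_nth)
  moreover have "ehead Z (P ! i) = etail Z (P ! Suc i)"
    using assms unfolding is_walk_def by auto
  ultimately show ?thesis unfolding reaches_def by metis
qed

lemma reaches_from_hd: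
  assumes "is_walk Z W" "W \<noteq> []" "e \<in> set W"
  shows "reaches Z (etail Z (hd W)) (ehead Z e)"
proof -
  obtain m where m: "m < length W" "W ! m = e" using assms(3) by (metis in_set_conv_nth)
  let ?V = "take (Suc m) W"
  have "is_walk Z ?V" "?V \<noteq> []" "hd ?V = hd W"
    using assms by (simp_all add: is_walk_take hd_take)
  moreover have "last ?V = e"
    using m by (simp del: take_Suc add: take_Suc_conv_app_nth)
  ultimately show ?thesis unfolding reaches_def by metis
qed

lemma src_neq_snk:
  assumes "is_nbp Z V" "ss_path Z P" "P \<noteq> []"
  shows "src Z \<noteq> snk Z"
  using assms unfolding is_nbp_def ss_path_def by metis

lemma reachable_vertex_in_drop:
  assumes nbp: "is_nbp Z V" and w: "is_walk Z P" and m: "m < length P"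
    and y: "y \<in> ehead Z ` set P" and r: "reaches Z (ehead Z (P ! m)) y"
  shows "y \<in> ehead Z ` set (drop (Suc m) P)"
proof -
  obtain m' where m': "m' < length P" "ehead Z (P ! m') = y"
    using y by (metis imageE in_set_conv_nth)
  have "m < m'"
  proof (rule ccontr)
    assume "\<not> m < m'"
    then consider "m' = m" | "m' < m" by linarith
    then show False
    proof cases
      case 1
      then show False using r m' reaches_irrefl[OF nbp] by simp
    next
      case 2
      then show False using reaches_nth[OF w 2 m] r m' reaches_trans reaches_irrefl[OF nbp] by metis
    qed
  qed
  then have "drop (Suc m) P ! (m' - Suc m) = P ! m'" "m' - Suc m < length (drop (Suc m) P)"
    using m' by auto
  then show ?thesis using m' by (metis image_eqI nth_mem)
qed

text \<open>A walk that visits the inner cut points of a partition of another walk visits them in the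
  same order, because the branching program is acyclic; hence it can be cut at the same points.\<close>

lemma walk_cut_at_points:
  assumes nbp: "is_nbp Z V"
  shows "is_walk Z (concat Ps) \<Longrightarrow> \<forall>Q\<in>set Ps. Q \<noteq> [] \<Longrightarrow> Ps \<noteq> [] \<Longrightarrow> is_walk Z P \<Longrightarrow> P \<noteq> [] \<Longrightarrow>
    \<forall>k < length Ps - 1. ehead Z (last (Ps ! k)) \<in> ehead Z ` set P \<Longrightarrow>
    \<forall>k < length Ps - 1. ehead Z (last P) \<noteq> ehead Z (last (Ps ! k)) \<Longrightarrow>
    \<exists>Qs. length Qs = length Ps \<and> concat Qs = P \<and> (\<forall>Q\<in>set Qs. Q \<noteq> []) \<and>
      (\<forall>k < length Ps - 1. ehead Z (last (Qs ! k)) = ehead Z (last (Ps ! k)))"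
proof (induction Ps arbitrary: P)
  case Nil
  then show ?case by simp
next
  case (Cons Q0 Rest)
  show ?case
  proof (cases "Rest = []")
    case True
    then show ?thesis using Cons.prems by (intro exI[of _ "[P]"]) auto
  next
    case False
    define x where "x = ehead Z (last Q0)"
    have "x \<in> ehead Z ` set P" using Cons.prems(6) False unfolding x_def by fastforce
    then obtain m where m: "m < length P" "ehead Z (P ! m) = x" by (metis imageE in_set_conv_nth)
    have "m \<noteq> length P - 1"
    proof
      assume "m = length P - 1"
      then have "ehead Z (last P) = x" using m Cons.prems(5) by (simp add: last_conv_nth)
      then show False using Cons.prems(7) False unfolding x_def by fastforce
    qed
    then have mlt: "Suc m < length P" using m by simp
    define A1 where "A1 = take (Suc m) P"
    define B where "B = drop (Suc m) P"
    have B: "B \<noteq> []" "is_walk Z B" "last B = last P"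
      using mlt Cons.prems(4) unfolding B_def by (auto simp: is_walk_drop)
    have A1: "A1 \<noteq> []" "ehead Z (last A1) = x"
      using m unfolding A1_def by (simp_all del: take_Suc add: take_Suc_conv_app_nth)
    have A1B: "A1 @ B = P" unfolding A1_def B_def by simp
    have cR: "concat Rest \<noteq> []" using Cons.prems(2) False by (cases Rest) auto
    have "is_walk Z (Q0 @ concat Rest)" using Cons.prems(1) by simp
    then have wR: "is_walk Z (concat Rest)" and jx: "etail Z (hd (concat Rest)) = x"
      using Cons.prems(2) cR unfolding x_def by (auto simp: is_walk_append)
    have bd: "\<forall>k < length Rest - 1. ehead Z (last (Rest ! k)) \<in> ehead Z ` set B"
    proof (intro allI impI)
      fix k assume k: "k < length Rest - 1"
      have "last (Rest ! k) \<in> set (concat Rest)"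
        using k Cons.prems(2) by (auto intro!: bexI[of _ "Rest ! k"])
      then have "reaches Z (ehead Z (P ! m)) (ehead Z (last (Rest ! k)))"
        using reaches_from_hd[OF wR cR] jx m(2) by metis
      moreover have "ehead Z (last (Rest ! k)) \<in> ehead Z ` set P"
        using Cons.prems(6)[rule_format, of "Suc k"] k by simp
      ultimately show "ehead Z (last (Rest ! k)) \<in> ehead Z ` set B"
        unfolding B_def using reachable_vertex_in_drop[OF nbp Cons.prems(4) m(1)] by blast
    qed
    have nb: "\<forall>k < length Rest - 1. ehead Z (last B) \<noteq> ehead Z (last (Rest ! k))"
      using Cons.prems(7) B(3) by (auto simp: less_diff_conv)
    obtain Qs where Qs: "length Qs = length Rest" "concat Qs = B" "\<forall>Q\<in>set Qs. Q \<noteq> []"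
      "\<forall>k < length Rest - 1. ehead Z (last (Qs ! k)) = ehead Z (last (Rest ! k))"
      using Cons.IH[OF wR _ False B(2) B(1) bd nb] Cons.prems(2) by auto
    show ?thesis
    proof (intro exI[of _ "A1 # Qs"] conjI allI impI)
      fix k assume "k < length (Q0 # Rest) - 1"
      then show "ehead Z (last ((A1 # Qs) ! k)) = ehead Z (last ((Q0 # Rest) ! k))"
        using A1 Qs x_def by (cases k) auto
    qed (use Qs A1 A1B in auto)
  qed
qed

definition same_cuts :: "('n, 'e, 'v) nbp \<Rightarrow> 'e list list \<Rightarrow> 'e list list \<Rightarrow> bool" where
  "same_cuts Z As Bs \<longleftrightarrow> length As = length Bs \<and> As \<noteq> [] \<and> (\<forall>Q\<in>set As. Q \<noteq> []) \<and> (\<forall>Q\<in>set Bs. Q \<noteq> [])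
     \<and> (\<forall>k < length As - 1. ehead Z (last (As ! k)) = ehead Z (last (Bs ! k)))"

lemma same_cuts_trans_sym: "same_cuts Z Ps As \<Longrightarrow> same_cuts Z Ps Bs \<Longrightarrow> same_cuts Z As Bs"
  unfolding same_cuts_def by auto

definition splice_parts :: "nat set \<Rightarrow> 'a list list \<Rightarrow> 'a list list \<Rightarrow> 'a list list" where
  "splice_parts K As Bs = map (\<lambda>k. if k \<in> K then As ! k else Bs ! k) [0..<length As]"

lemma length_splice_parts [simp]: "length (splice_parts K As Bs) = length As"
  by (simp add: splice_parts_def)

lemma nth_splice_parts: "k < length As \<Longrightarrow> splice_parts K As Bs ! k = (if k \<in> K then As ! k else Bs ! k)"
  by (simp add: splice_parts_def)

lemma mem_concat_splice_parts:
  "e \<in> set (concat (splice_parts K As Bs)) \<Longrightarrow>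
     \<exists>k < length As. (k \<in> K \<and> e \<in> set (As ! k)) \<or> (k \<notin> K \<and> e \<in> set (Bs ! k))"
  by (auto simp: splice_parts_def split: if_splits)

lemma ss_path_splice_parts:
  assumes m: "same_cuts Z As Bs" and a: "ss_path Z (concat As)" and b: "ss_path Z (concat Bs)"
  shows "ss_path Z (concat (splice_parts K As Bs))"
proof -
  let ?R = "splice_parts K As Bs"
  have neA: "\<forall>Q\<in>set As. Q \<noteq> []" "As \<noteq> []" and neB: "\<forall>Q\<in>set Bs. Q \<noteq> []" "Bs \<noteq> []"
    and lenAB: "length Bs = length As"
    and cuts: "\<And>k. k < length As - 1 \<Longrightarrow> ehead Z (last (As ! k)) = ehead Z (last (Bs ! k))"
    using m unfolding same_cuts_def by auto
  have neR: "\<forall>Q\<in>set ?R. Q \<noteq> []" "?R \<noteq> []"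
    using neA neB lenAB by (auto simp: splice_parts_def) (metis nth_mem)+
  have wA: "(\<forall>Q\<in>set As. is_walk Z Q) \<and> (\<forall>k. Suc k < length As \<longrightarrow> ehead Z (last (As ! k)) = etail Z (hd (As ! Suc k)))"
    using a neA is_walk_concat[OF neA(1), of Z] unfolding ss_path_def by auto
  have wB: "(\<forall>Q\<in>set Bs. is_walk Z Q) \<and> (\<forall>k. Suc k < length Bs \<longrightarrow> ehead Z (last (Bs ! k)) = etail Z (hd (Bs ! Suc k)))"
    using b neB is_walk_concat[OF neB(1), of Z] unfolding ss_path_def by auto
  have "is_walk Z (concat ?R)"
    unfolding is_walk_concat[OF neR(1)]
  proof (intro conjI allI impI ballI)
    fix Q assume "Q \<in> set ?R"
    then show "is_walk Z Q" using wA wB lenAB by (auto simp: splice_parts_def)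
  next
    fix k assume k: "Suc k < length ?R"
    have "ehead Z (last (?R ! k)) = ehead Z (last (As ! k))"
      using nth_splice_parts[of k As K Bs] k cuts[of k] by auto
    moreover have "etail Z (hd (?R ! Suc k)) = etail Z (hd (As ! Suc k))"
      using nth_splice_parts[of "Suc k" As K Bs] k cuts[of k] wA wB lenAB by auto
    ultimately show "ehead Z (last (?R ! k)) = etail Z (hd (?R ! Suc k))"
      using wA k by auto
  qed
  moreover have "etail Z (hd (concat ?R)) = src Z"
    using a b neA neB neR nth_splice_parts[of 0 As K Bs]
    by (simp add: ss_path_def hd_concat_nonempty)
  moreover have "ehead Z (last (concat ?R)) = snk Z"
    using a b neA neB neR nth_splice_parts[of "length As - 1" As K Bs] lenAB
    by (simp add: ss_path_def last_concat_nonempty)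
  ultimately show ?thesis using neR by (simp add: ss_path_def)
qed

definition var_count :: "('n, 'e, 'v) nbp \<Rightarrow> 'v \<Rightarrow> 'e list \<Rightarrow> nat" where
  "var_count Z x L = length (filter (\<lambda>e. \<exists>b. elab Z e = Some (x, b)) L)"

lemma var_count_concat: "var_count Z x (concat Ls) = (\<Sum>k<length Ls. var_count Z x (Ls ! k))"
proof -
  have "var_count Z x (concat Ls) = sum_list (map (var_count Z x) Ls)"
    by (induction Ls) (auto simp: var_count_def)
  then show ?thesis by (simp add: sum_list_sum_nth atLeast0LessThan)
qed

lemma var_count_splice_parts:
  "var_count Z x (concat (splice_parts K As Bs)) =
     (\<Sum>k<length As. if k \<in> K then var_count Z x (As ! k) else var_count Z x (Bs ! k))"
  by (auto simp: var_count_concat splice_parts_def intro!: sum.cong)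

lemma var_count_pos: "e \<in> set L \<Longrightarrow> elab Z e = Some (x, b) \<Longrightarrow> var_count Z x L > 0"
  unfolding var_count_def length_greater_0_conv filter_empty_conv by blast

definition vars_only_in :: "('n, 'e, 'v) nbp \<Rightarrow> 'e list list \<Rightarrow> 'v set \<Rightarrow> nat set \<Rightarrow> bool" where
  "vars_only_in Z Qs Y K \<longleftrightarrow>
     (\<forall>k < length Qs. \<forall>e\<in>set (Qs ! k). \<forall>x b. elab Z e = Some (x, b) \<longrightarrow> x \<in> Y \<longrightarrow> k \<in> K)"

lemma var_count_outside:
  "vars_only_in Z Ps Y K \<Longrightarrow> x \<in> Y \<Longrightarrow> k < length Ps \<Longrightarrow> k \<notin> K \<Longrightarrow> var_count Z x (Ps ! k) = 0"
  unfolding vars_only_in_def var_count_def by (auto simp: filter_empty_conv)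

text \<open>Splicing the \<open>K\<close>-parts of \<open>Ps\<close> with the other parts of \<open>Qs\<close> yields a source-sink path, so
  uniformity forces the variables of \<open>Y\<close> to be read equally often on both, i.e. never outside \<open>K\<close> on \<open>Qs\<close>.\<close>

lemma vars_only_in_transfer:
  assumes u: "uniform_read Z V d" and Y: "Y \<subseteq> V" and m: "same_cuts Z Ps Qs"
    and a: "ss_path Z (concat Ps)" and b: "ss_path Z (concat Qs)" and o: "vars_only_in Z Ps Y K"
  shows "vars_only_in Z Qs Y K"
  unfolding vars_only_in_def
proof (intro allI impI ballI)
  fix k e x b
  assume k: "k < length Qs" and e: "e \<in> set (Qs ! k)" and l: "elab Z e = Some (x, b)" and x: "x \<in> Y"
  have len: "length Qs = length Ps" using m by (simp add: same_cuts_def)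
  have count_d: "\<And>P. ss_path Z P \<Longrightarrow> var_count Z x P = d"
    using u x Y unfolding uniform_read_def var_count_def by auto
  have "(\<Sum>j<length Ps. var_count Z x (Ps ! j)) = d"
    using count_d[OF a] by (simp only: var_count_concat)
  moreover have "(\<Sum>j<length Ps. var_count Z x (Ps ! j)) =
      (\<Sum>j<length Ps. if j \<in> K then var_count Z x (Ps ! j) else 0)"
    using var_count_outside[OF o x] by (intro sum.cong) auto
  moreover have "(\<Sum>j<length Ps. if j \<in> K then var_count Z x (Ps ! j) else var_count Z x (Qs ! j)) = d"
    using count_d[OF ss_path_splice_parts[OF m a b]] by (simp only: var_count_splice_parts)
  moreover have "(\<Sum>j<length Ps. if j \<in> K then var_count Z x (Ps ! j) else var_count Z x (Qs ! j)) =
      (\<Sum>j<length Ps. if j \<in> K then var_count Z x (Ps ! j) else 0)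
      + (\<Sum>j<length Ps. if j \<in> K then 0 else var_count Z x (Qs ! j))"
    by (simp add: sum.distrib[symmetric] if_distrib) (intro sum.cong, auto)
  ultimately have "(\<Sum>j<length Ps. if j \<in> K then 0 else var_count Z x (Qs ! j)) = 0"
    by linarith
  then have "(if k \<in> K then 0 else var_count Z x (Qs ! k)) = 0"
    using k len by (subst (asm) sum_eq_0_iff) auto
  then show "k \<in> K" using var_count_pos[OF e l] by (auto split: if_splits)
qed

lemma walk_through_cut_points:
  assumes nbp: "is_nbp Z V" and gp: "gen_partition Z P0 X Ps" and P0: "ss_path Z P0"
    and X: "src Z \<notin> X" "snk Z \<notin> X" and P: "ss_path Z P" "X \<subseteq> path_verts Z P"
  obtains Qs where "same_cuts Z Ps Qs" "concat Qs = P"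
proof -
  have parts: "concat Ps = P0" "length Ps = card X + 1" "\<forall>Q\<in>set Ps. Q \<noteq> []"
    and cuts: "X = {ehead Z (last (Ps ! k)) | k. k < card X}"
    using gp unfolding gen_partition_def by auto
  have Psne: "Ps \<noteq> []" using parts(2) by auto
  then have "P0 \<noteq> []" using parts by (cases Ps) auto
  then have Pne: "P \<noteq> []" using P(1) src_neq_snk[OF nbp P0] unfolding ss_path_def by auto
  have wP: "is_walk Z P" "ehead Z (last P) = snk Z" using P(1) Pne by (auto simp: ss_path_def)
  have cut_in_X: "ehead Z (last (Ps ! k)) \<in> X" if "k < length Ps - 1" for k
    using that parts(2) by (subst cuts) auto
  have "\<forall>k<length Ps - 1. ehead Z (last (Ps ! k)) \<in> ehead Z ` set P"
  proof (intro allI impI)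
    fix k assume "k < length Ps - 1"
    then have "ehead Z (last (Ps ! k)) \<in> X" by (rule cut_in_X)
    then show "ehead Z (last (Ps ! k)) \<in> ehead Z ` set P"
      using P(2) X(1) unfolding path_verts_def by auto
  qed
  moreover have "\<forall>k<length Ps - 1. ehead Z (last P) \<noteq> ehead Z (last (Ps ! k))"
    using cut_in_X X(2) wP(2) by auto
  moreover have "is_walk Z (concat Ps)" using P0 parts(1) unfolding ss_path_def by simp
  ultimately obtain Qs where "length Qs = length Ps" "concat Qs = P" "\<forall>Q\<in>set Qs. Q \<noteq> []"
      "\<forall>k<length Ps - 1. ehead Z (last (Qs ! k)) = ehead Z (last (Ps ! k))"
    using walk_cut_at_points[OF nbp _ parts(3) Psne wP(1) Pne] by blast
  then show thesis using parts(3) Psne by (intro that[of Qs]) (auto simp: same_cuts_def)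
qed

definition decomposes :: "('n, 'e, 'v) nbp \<Rightarrow> 'e list list \<Rightarrow> 'v set \<Rightarrow> 'v set \<Rightarrow> nat set \<Rightarrow> 'e list \<Rightarrow> bool" where
  "decomposes Z Ps Y1 Y2 K P \<longleftrightarrow>
     (\<exists>Qs. same_cuts Z Ps Qs \<and> concat Qs = P \<and> vars_only_in Z Qs Y1 K \<and> vars_only_in Z Qs Y2 (- K))"

lemma alternates_vars_only_in:
  "alternates Z Ps Y1 Y2 \<Longrightarrow> vars_only_in Z Ps Y1 {k. even k} \<and> vars_only_in Z Ps Y2 (- {k. even k})"
  unfolding alternates_def vars_only_in_def by auto

lemma separator_decomposition:
  assumes nbp: "is_nbp Z V" and ur: "uniform_read Z V d" and Y: "Y1 \<subseteq> V" "Y2 \<subseteq> V"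
    and sep: "separates Z X Y1 Y2"
  obtains Ps K where "\<And>P. computational Z P \<Longrightarrow> X \<subseteq> path_verts Z P \<Longrightarrow> decomposes Z Ps Y1 Y2 K P"
proof -
  obtain P0 Ps where P0: "computational Z P0" and gp: "gen_partition Z P0 X Ps"
    and alt: "alternates Z Ps Y1 Y2 \<or> alternates Z Ps Y2 Y1" and X: "src Z \<notin> X" "snk Z \<notin> X"
    using sep unfolding separates_def by blast
  obtain K where K: "vars_only_in Z Ps Y1 K" "vars_only_in Z Ps Y2 (- K)"
  proof (cases "alternates Z Ps Y1 Y2")
    case True
    then show thesis using that alternates_vars_only_in by blast
  next
    case False
    then have "vars_only_in Z Ps Y2 {k. even k}" "vars_only_in Z Ps Y1 (- {k. even k})"
      using alt alternates_vars_only_in[of Z Ps Y2 Y1] by auto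
    then show thesis using that[of "- {k. even k}"] by simp
  qed
  have ssP0: "ss_path Z P0" "concat Ps = P0"
    using P0 gp unfolding computational_def gen_partition_def by auto
  show thesis
  proof (rule that)
    fix P assume cP: "computational Z P" and XP: "X \<subseteq> path_verts Z P"
    then have ssP: "ss_path Z P" unfolding computational_def by simp
    obtain Qs where Qs: "same_cuts Z Ps Qs" "concat Qs = P"
      using walk_through_cut_points[OF nbp gp ssP0(1) X ssP XP] by blast
    show "decomposes Z Ps Y1 Y2 K P"
      unfolding decomposes_def
      using Qs ssP ssP0 K vars_only_in_transfer[OF ur Y(1) Qs(1)] vars_only_in_transfer[OF ur Y(2) Qs(1)]
      by auto
  qed
qed

definition mixed_literals :: "'v lit set \<Rightarrow> 'v lit set \<Rightarrow> 'v lit set \<Rightarrow> 'v set \<Rightarrow> 'v set \<Rightarrow> bool" where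
  "mixed_literals L L1 L2 Y1 Y2 \<longleftrightarrow> (\<forall>x \<beta>. (x, \<beta>) \<in> L \<longrightarrow>
     (x, \<beta>) \<in> L1 \<union> L2 \<and> (x \<in> Y1 \<longrightarrow> (x, \<beta>) \<in> L1) \<and> (x \<in> Y2 \<longrightarrow> (x, \<beta>) \<in> L2))"

lemma splice_decompositions:
  assumes dec: "decomposes Z Ps Y1 Y2 K P1" "decomposes Z Ps Y1 Y2 K P2"
    and ss: "ss_path Z P1" "ss_path Z P2"
  obtains R where "ss_path Z R" "mixed_literals (A Z R) (A Z P1) (A Z P2) Y1 Y2"
proof -
  obtain Q1s where Q1: "same_cuts Z Ps Q1s" "concat Q1s = P1" "vars_only_in Z Q1s Y2 (- K)"
    using dec(1) unfolding decomposes_def by blast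
  obtain Q2s where Q2: "same_cuts Z Ps Q2s" "concat Q2s = P2" "vars_only_in Z Q2s Y1 K"
    using dec(2) unfolding decomposes_def by blast
  have m: "same_cuts Z Q1s Q2s" using same_cuts_trans_sym[OF Q1(1) Q2(1)] .
  then have len: "length Q2s = length Q1s" unfolding same_cuts_def by simp
  let ?R = "concat (splice_parts K Q1s Q2s)"
  have "ss_path Z ?R" using ss_path_splice_parts[OF m] ss Q1(2) Q2(2) by simp
  moreover have "mixed_literals (A Z ?R) (A Z P1) (A Z P2) Y1 Y2"
    unfolding mixed_literals_def
  proof (intro allI impI)
    fix x \<beta> assume "(x, \<beta>) \<in> A Z ?R"
    then obtain e where e: "e \<in> set ?R" "elab Z e = Some (x, \<beta>)" unfolding A_def by auto
    obtain k where k: "k < length Q1s" "(k \<in> K \<and> e \<in> set (Q1s ! k)) \<or> (k \<notin> K \<and> e \<in> set (Q2s ! k))"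
      using mem_concat_splice_parts[OF e(1)] by blast
    show "(x, \<beta>) \<in> A Z P1 \<union> A Z P2 \<and> (x \<in> Y1 \<longrightarrow> (x, \<beta>) \<in> A Z P1) \<and> (x \<in> Y2 \<longrightarrow> (x, \<beta>) \<in> A Z P2)"
    proof (cases "k \<in> K")
      case True
      then have "e \<in> set P1" using k Q1(2) by (auto intro!: bexI[of _ "Q1s ! k"])
      then have "(x, \<beta>) \<in> A Z P1" using e(2) unfolding A_def by auto
      moreover have "x \<notin> Y2" using Q1(3) k True e(2) unfolding vars_only_in_def by blast
      ultimately show ?thesis by auto
    next
      case False
      then have "e \<in> set P2" using k Q2(2) len by (auto intro!: bexI[of _ "Q2s ! k"])
      then have "(x, \<beta>) \<in> A Z P2" using e(2) unfolding A_def by auto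
      moreover have "x \<notin> Y1" using Q2(3) k len False e(2) unfolding vars_only_in_def by fastforce
      ultimately show ?thesis by auto
    qed
  qed
  ultimately show thesis using that by blast
qed

definition consistent :: "'v lit set \<Rightarrow> bool" where
  "consistent L \<longleftrightarrow> \<not> (\<exists>x. (x, True) \<in> L \<and> (x, False) \<in> L)"

lemma computational_iff: "computational Z P \<longleftrightarrow> ss_path Z P \<and> consistent (A Z P)"
  by (simp add: computational_def consistent_def)

lemma mixed_literal_decided:
  assumes "mixed_literals L L1 L2 Y1 Y2" "consistent L1" "consistent L2" "S \<subseteq> L1" "S \<subseteq> L2"
    and "(x, \<beta>) \<in> L" "x \<notin> Y1" "x \<notin> Y2" "(x, True) \<in> S \<or> (x, False) \<in> S"
  shows "(x, \<beta>) \<in> S"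
proof -
  have "(x, \<beta>) \<in> L1 \<union> L2" using assms(1,6) unfolding mixed_literals_def by blast
  moreover have "(x, \<not> \<beta>) \<notin> S"
  proof
    assume "(x, \<not> \<beta>) \<in> S"
    with \<open>(x, \<beta>) \<in> L1 \<union> L2\<close> assms(2-5) show False
      unfolding consistent_def by (cases \<beta>) auto
  qed
  ultimately show ?thesis using assms(9) by (cases \<beta>) auto
qed

lemma consistent_mixed_literals:
  assumes mix: "mixed_literals L L1 L2 Y1 Y2" and c: "consistent L1" "consistent L2"
    and S: "S \<subseteq> L1" "S \<subseteq> L2"
    and decided: "\<And>x \<beta>. (x, \<beta>) \<in> L \<Longrightarrow> x \<notin> Y1 \<Longrightarrow> x \<notin> Y2 \<Longrightarrow> (x, True) \<in> S \<or> (x, False) \<in> S"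
  shows "consistent L"
  unfolding consistent_def
proof
  assume "\<exists>x. (x, True) \<in> L \<and> (x, False) \<in> L"
  then obtain x where x: "(x, True) \<in> L" "(x, False) \<in> L" by blast
  show False
  proof (cases "x \<in> Y1 \<or> x \<in> Y2")
    case True
    then show ?thesis using mix x c unfolding mixed_literals_def consistent_def by blast
  next
    case False
    then have "(x, True) \<in> S" "(x, False) \<in> S"
      using mixed_literal_decided[OF mix c S] x decided by blast+
    then show False using S(1) c(1) unfolding consistent_def by blast
  qed
qed

lemma literal_var_mem: "is_nbp Z V \<Longrightarrow> is_walk Z P \<Longrightarrow> (x, b) \<in> A Z P \<Longrightarrow> x \<in> V"
  unfolding is_nbp_def is_walk_def A_def by force

text \<open>Set every variable not made true by the path to false: a positive clause satisfied by this
  total assignment is already satisfied by the path.\<close>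

lemma computational_satisfies_positive_cnf:
  assumes nbp: "is_nbp Z V" and comp: "computes Z V (\<lambda>S. satisfies S \<phi>)"
    and pos: "\<Union>\<phi> \<subseteq> UNIV \<times> {True}" and P: "computational Z P"
  shows "satisfies (A Z P) \<phi>"
proof -
  define S where "S = A Z P \<union> {(x, False) | x. x \<in> V \<and> (x, True) \<notin> A Z P}"
  have w: "is_walk Z P" and c: "consistent (A Z P)"
    using P unfolding computational_iff ss_path_def by auto
  have "total_assignment V S"
    unfolding total_assignment_def
  proof (intro conjI ballI subsetI)
    fix l assume "l \<in> S"
    then show "l \<in> V \<times> UNIV" unfolding S_def using literal_var_mem[OF nbp w] by (cases l) auto
  next
    fix x assume "x \<in> V"
    then show "(x, True) \<in> S \<longleftrightarrow> (x, False) \<notin> S" using c unfolding S_def consistent_def by auto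
  qed
  moreover have "A Z P \<subseteq> S" unfolding S_def by auto
  ultimately have "satisfies S \<phi>" using comp P unfolding computes_def by blast
  moreover have "S \<inter> UNIV \<times> {True} \<subseteq> A Z P" unfolding S_def by auto
  ultimately show ?thesis using pos unfolding satisfies_def by blast
qed

lemma phi_H_positive: "\<Union>(phi_H H) \<subseteq> UNIV \<times> {True}"
  unfolding phi_H_def pos_clause_def by auto

lemma binary_tree_based_rooted_tree:
  "binary_tree_based H \<Longrightarrow> i \<in> tidx H \<Longrightarrow> rooted_tree (tverts H i) (tedges H i) (troot H i)"
  unfolding binary_tree_based_def extended_tree_def by simp

lemma rooted_tree_facts:
  "rooted_tree V E r \<Longrightarrow> finite V \<and> r \<in> V \<and> E \<subseteq> V \<times> V \<and> (\<forall>v\<in>V. (r, v) \<in> E\<^sup>*)"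
  by (simp add: rooted_tree_def)

lemma troot_in_tverts: "binary_tree_based H \<Longrightarrow> i \<in> tidx H \<Longrightarrow> troot H i \<in> tverts H i"
  using rooted_tree_facts binary_tree_based_rooted_tree by metis

lemma tedges_subset: "binary_tree_based H \<Longrightarrow> i \<in> tidx H \<Longrightarrow> tedges H i \<subseteq> tverts H i \<times> tverts H i"
  using rooted_tree_facts binary_tree_based_rooted_tree by metis

lemma reachable_from_troot:
  "binary_tree_based H \<Longrightarrow> i \<in> tidx H \<Longrightarrow> v \<in> tverts H i \<Longrightarrow> (troot H i, v) \<in> (tedges H i)\<^sup>*"
  using rooted_tree_facts binary_tree_based_rooted_tree by metis

lemma tverts_Int_subset_lvs:
  "binary_tree_based H \<Longrightarrow> i \<in> tidx H \<Longrightarrow> k \<in> tidx H \<Longrightarrow> i \<noteq> k \<Longrightarrow>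
     tverts H i \<inter> tverts H k \<subseteq> lvs H i \<inter> lvs H k"
  unfolding binary_tree_based_def by simp

lemma lvs_subset_tverts: "lvs H i \<subseteq> tverts H i"
  unfolding lvs_def tree_leaves_def by auto

lemma troot_notin_lvs: "troot H i \<notin> lvs H i"
  unfolding lvs_def tree_leaves_def by auto

lemma Roots_subset_HV: "binary_tree_based H \<Longrightarrow> Roots H \<subseteq> HV H"
  unfolding Roots_def HV_def using troot_in_tverts by fastforce

lemma adjacent_sym: "adjacent H i j \<Longrightarrow> adjacent H j i"
  unfolding adjacent_def by auto

lemma troot_in_other_tree:
  assumes bt: "binary_tree_based H" and i: "i \<in> tidx H" and k: "k \<in> tidx H"
    and "troot H k \<in> tverts H i"
  shows "k = i"
proof (rule ccontr)
  assume "k \<noteq> i"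
  then have "troot H k \<in> lvs H k"
    using tverts_Int_subset_lvs[OF bt i k] assms(4) troot_in_tverts[OF bt k] by blast
  then show False using troot_notin_lvs by metis
qed

lemma troot_inj: "binary_tree_based H \<Longrightarrow> i \<in> tidx H \<Longrightarrow> k \<in> tidx H \<Longrightarrow> troot H i = troot H k \<Longrightarrow> i = k"
  using troot_in_other_tree troot_in_tverts by metis

lemma shared_leaf_mem:
  assumes bt: "binary_tree_based H" and adj: "adjacent H i j"
  shows "shared_leaf H i j \<in> lvs H i \<inter> lvs H j"
proof -
  have ij: "i \<in> tidx H" "j \<in> tidx H" "i \<noteq> j" and ne: "lvs H i \<inter> lvs H j \<noteq> {}"
    using adj unfolding adjacent_def by auto
  have "card (tverts H i \<inter> tverts H j) \<le> 1"
    using bt ij unfolding binary_tree_based_def by simp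
  moreover have "finite (tverts H i)"
    using rooted_tree_facts[OF binary_tree_based_rooted_tree[OF bt ij(1)]] by simp
  ultimately have unique: "a = b" if "a \<in> tverts H i \<inter> tverts H j" "b \<in> tverts H i \<inter> tverts H j" for a b
    using that card_le_Suc0_iff_eq[of "tverts H i \<inter> tverts H j"] by auto
  obtain l where l: "l \<in> lvs H i \<inter> lvs H j" using ne by blast
  have "l' = l" if "l' \<in> lvs H i \<inter> lvs H j" for l'
    using unique that l lvs_subset_tverts[of H i] lvs_subset_tverts[of H j] by blast
  then have "shared_leaf H i j = l" unfolding shared_leaf_def using l by (intro the_equality) blast+
  then show ?thesis using l by simp
qed

lemma troot_in_half_path:
  assumes bt: "binary_tree_based H" and adj: "adjacent H i j"
  shows "troot H i \<in> half_path H i j"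
proof -
  have "i \<in> tidx H" using adj unfolding adjacent_def by auto
  moreover have "shared_leaf H i j \<in> tverts H i"
    using shared_leaf_mem[OF bt adj] lvs_subset_tverts[of H i] by blast
  ultimately show ?thesis using reachable_from_troot[OF bt] unfolding half_path_def by simp
qed

lemma troot_in_half_path_eq:
  assumes bt: "binary_tree_based H" and adj: "adjacent H i j" and k: "k \<in> tidx H"
    and h: "troot H k \<in> half_path H i j"
  shows "k = i"
proof -
  have i: "i \<in> tidx H" using adj unfolding adjacent_def by auto
  have l: "shared_leaf H i j \<in> tverts H i"
    using shared_leaf_mem[OF bt adj] lvs_subset_tverts[of H i] by blast
  have "(troot H k, shared_leaf H i j) \<in> (tedges H i)\<^sup>*" using h unfolding half_path_def by simp
  then have "troot H k \<in> tverts H i"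
    by (cases rule: converse_rtranclE) (use l tedges_subset[OF bt i] in auto)
  then show ?thesis using troot_in_other_tree[OF bt i k] by simp
qed

lemma troot_in_full_path:
  "binary_tree_based H \<Longrightarrow> adjacent H i j \<Longrightarrow> k \<in> tidx H \<Longrightarrow> troot H k \<in> full_path H i j \<Longrightarrow> k = i \<or> k = j"
  unfolding full_path_def by (auto dest: troot_in_half_path_eq adjacent_sym)

lemma half_clause_troot:
  assumes bt: "binary_tree_based H" and adj: "adjacent H i j"
  shows "half_clause H {troot H i, troot H j} (troot H i) = pos_clause (half_path H i j)"
proof -
  have ij: "i \<in> tidx H" "j \<in> tidx H" "i \<noteq> j" using adj unfolding adjacent_def by auto
  then have "troot H i \<noteq> troot H j" using troot_inj[OF bt] by blast
  then have "{troot H i, troot H j} - {troot H i} = {troot H j}" by auto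
  moreover have "tree_of_root H (troot H k) = k" if "k \<in> tidx H" for k
    unfolding tree_of_root_def by (rule the_equality) (use that troot_inj[OF bt] in auto)
  ultimately show ?thesis unfolding half_clause_def using ij by simp
qed

lemma pseudomatching_edge:
  assumes pm: "pseudomatching_between H M Y1 Y2" and e: "e \<in> M" and dis: "Y1 \<inter> Y2 = {}"
  obtains i j where "adjacent H i j" "e = {troot H i, troot H j}" "troot H i \<in> Y1" "troot H j \<in> Y2"
proof -
  have "pseudoedge H e" using pm e unfolding pseudomatching_between_def by blast
  then obtain i j where adj: "adjacent H i j" and ee: "e = {troot H i, troot H j}"
    unfolding pseudoedge_def by blast
  have "card (e \<inter> Y1) = 1" "card (e \<inter> Y2) = 1"
    using pm e unfolding pseudomatching_between_def by auto
  then have "e \<inter> Y1 \<noteq> {}" "e \<inter> Y2 \<noteq> {}" by auto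
  then consider "troot H i \<in> Y1" "troot H j \<in> Y2" | "troot H j \<in> Y1" "troot H i \<in> Y2"
    using ee dis by blast
  then show thesis
  proof cases
    case 1
    then show thesis using that adj ee by blast
  next
    case 2
    then show thesis using that[OF adjacent_sym[OF adj]] ee by (simp add: insert_commute)
  qed
qed

lemma Union_pseudomatching_subset:
  "pseudomatching_between H M Y1 Y2 \<Longrightarrow> Y1 \<inter> Y2 = {} \<Longrightarrow> \<Union>M \<subseteq> Y1 \<union> Y2"
  by (blast elim: pseudomatching_edge)

lemma full_path_clause_dichotomy:
  assumes bt: "binary_tree_based H" and adj: "adjacent H i j"
    and Y: "Y1 \<subseteq> Roots H" "Y2 \<subseteq> Roots H" "Y1 \<inter> Y2 = {}"
    and ij: "troot H i \<in> Y1" "troot H j \<in> Y2"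
    and mix: "mixed_literals L L1 L2 Y1 Y2" and c: "consistent L1" "consistent L2"
    and S: "S \<subseteq> L1" "S \<subseteq> L2"
    and decided: "\<And>x \<beta>. (x, \<beta>) \<in> L \<Longrightarrow> x \<notin> Y1 \<Longrightarrow> x \<notin> Y2 \<Longrightarrow> (x, True) \<in> S \<or> (x, False) \<in> S"
    and hit: "pos_clause (full_path H i j) \<inter> L \<noteq> {}"
  shows "pos_clause (half_path H i j) \<inter> L1 \<noteq> {} \<or> pos_clause (half_path H j i) \<inter> L2 \<noteq> {}"
proof -
  obtain v where v: "(v, True) \<in> L" "v \<in> full_path H i j"
    using hit unfolding pos_clause_def by blast
  have root_end: "v = troot H i \<or> v = troot H j" if "v \<in> Roots H"
    using that v(2) troot_in_full_path[OF bt adj] unfolding Roots_def by blast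
  consider "v \<in> Y1" | "v \<in> Y2" | "v \<notin> Y1" "v \<notin> Y2" by blast
  then show ?thesis
  proof cases
    case 1
    then have "v = troot H i" using root_end Y ij by blast
    moreover have "(v, True) \<in> L1" using 1 v(1) mix unfolding mixed_literals_def by blast
    ultimately show ?thesis using troot_in_half_path[OF bt adj] unfolding pos_clause_def by blast
  next
    case 2
    then have "v = troot H j" using root_end Y ij by blast
    moreover have "(v, True) \<in> L2" using 2 v(1) mix unfolding mixed_literals_def by blast
    ultimately show ?thesis
      using troot_in_half_path[OF bt adjacent_sym[OF adj]] unfolding pos_clause_def by blast
  next
    case 3
    have "(v, True) \<in> S" using mixed_literal_decided[OF mix c S v(1) 3 decided[OF v(1) 3]] .
    then have "(v, True) \<in> L1" "(v, True) \<in> L2" using S by auto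
    then show ?thesis using v(2) unfolding full_path_def pos_clause_def by auto
  qed
qed

text \<open>The clause of a pseudoedge can be chosen uniformly: if some good path misses the half clause
  of one end, then every good path meets the half clause of the other end.\<close>

lemma pseudomatching_clause_choice:
  assumes bt: "binary_tree_based H" and pm: "pseudomatching_between H M Y1 Y2" and dis: "Y1 \<inter> Y2 = {}"
    and cross: "\<And>i j P1 P2. adjacent H i j \<Longrightarrow> troot H i \<in> Y1 \<Longrightarrow> troot H j \<in> Y2 \<Longrightarrow> good P1 \<Longrightarrow> good P2 \<Longrightarrow>
      pos_clause (half_path H i j) \<inter> L P1 \<noteq> {} \<or> pos_clause (half_path H j i) \<inter> L P2 \<noteq> {}"
  shows "\<exists>\<phi>\<in>CNF_M H M. \<forall>P. good P \<longrightarrow> satisfies (L P) \<phi>"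
proof -
  have "\<exists>t\<in>e. \<forall>P. good P \<longrightarrow> half_clause H e t \<inter> L P \<noteq> {}" if e: "e \<in> M" for e
  proof -
    obtain i j where ij: "adjacent H i j" "e = {troot H i, troot H j}" "troot H i \<in> Y1" "troot H j \<in> Y2"
      using pseudomatching_edge[OF pm e dis] by blast
    have hi: "half_clause H e (troot H i) = pos_clause (half_path H i j)"
      and hj: "half_clause H e (troot H j) = pos_clause (half_path H j i)"
      using half_clause_troot[OF bt ij(1)] half_clause_troot[OF bt adjacent_sym[OF ij(1)]] ij(2)
      by (simp_all add: insert_commute)
    show ?thesis
    proof (cases "\<forall>P. good P \<longrightarrow> pos_clause (half_path H i j) \<inter> L P \<noteq> {}")
      case True
      then show ?thesis using hi ij(2) by blast
    next
      case False
      then obtain P1 where "good P1" "pos_clause (half_path H i j) \<inter> L P1 = {}" by blast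
      then have "\<forall>P. good P \<longrightarrow> pos_clause (half_path H j i) \<inter> L P \<noteq> {}"
        using cross[OF ij(1,3,4)] by blast
      then show ?thesis using hj ij(2) by blast
    qed
  qed
  then obtain c where c: "\<forall>e\<in>M. c e \<in> e \<and> (\<forall>P. good P \<longrightarrow> half_clause H e (c e) \<inter> L P \<noteq> {})"
    by metis
  then have "(\<lambda>e. half_clause H e (c e)) ` M \<in> CNF_M H M" unfolding CNF_M_def by blast
  moreover have "\<forall>P. good P \<longrightarrow> satisfies (L P) ((\<lambda>e. half_clause H e (c e)) ` M)"
    using c unfolding satisfies_def by blast
  ultimately show ?thesis by blast
qed

lemma spliced_path_meets_half_clause:
  assumes bt: "binary_tree_based H" and nbp: "is_nbp Z (HV H)"
    and comp: "computes Z (HV H) (\<lambda>S. satisfies S (phi_H H))"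
    and Y: "Y1 \<subseteq> Roots H" "Y2 \<subseteq> Roots H" "Y1 \<inter> Y2 = {}"
    and pm: "pseudomatching_between H M Y1 Y2" and tot: "total_assignment (HV H - \<Union>M) S"
    and adj: "adjacent H i j" and ij: "troot H i \<in> Y1" "troot H j \<in> Y2"
    and P: "computational Z P1" "computational Z P2" "S \<subseteq> A Z P1" "S \<subseteq> A Z P2"
    and dec: "decomposes Z Ps Y1 Y2 K P1" "decomposes Z Ps Y1 Y2 K P2"
  shows "pos_clause (half_path H i j) \<inter> A Z P1 \<noteq> {} \<or> pos_clause (half_path H j i) \<inter> A Z P2 \<noteq> {}"
proof -
  have c: "consistent (A Z P1)" "consistent (A Z P2)" and ss: "ss_path Z P1" "ss_path Z P2"
    using P(1,2) unfolding computational_iff by blast+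
  obtain R where R: "ss_path Z R" "mixed_literals (A Z R) (A Z P1) (A Z P2) Y1 Y2"
    using splice_decompositions[OF dec ss] by blast
  have decided: "(x, True) \<in> S \<or> (x, False) \<in> S"
    if "(x, \<beta>) \<in> A Z R" "x \<notin> Y1" "x \<notin> Y2" for x \<beta>
  proof -
    have "x \<in> HV H" using literal_var_mem[OF nbp _ that(1)] R(1) unfolding ss_path_def by blast
    moreover have "x \<notin> \<Union>M" using Union_pseudomatching_subset[OF pm Y(3)] that(2,3) by blast
    ultimately show ?thesis using tot unfolding total_assignment_def by blast
  qed
  have "consistent (A Z R)" using consistent_mixed_literals[OF R(2) c P(3,4)] decided by blast
  then have "computational Z R" using R(1) computational_iff by blast
  then have "satisfies (A Z R) (phi_H H)"
    by (rule computational_satisfies_positive_cnf[OF nbp comp phi_H_positive])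
  moreover have "pos_clause (full_path H i j) \<in> phi_H H" using adj unfolding phi_H_def by blast
  ultimately have "pos_clause (full_path H i j) \<inter> A Z R \<noteq> {}" unfolding satisfies_def by blast
  then show ?thesis using full_path_clause_dichotomy[OF bt adj Y ij R(2) c P(3,4)] decided by blast
qed

theorem lemma7:
  fixes H :: "('i, 'v) tbg" and Z :: "('n, 'e, 'v) nbp" and d :: nat
    and X :: "'n set" and Y1 Y2 :: "'v set" and M :: "'v set set"
  assumes "binary_tree_based H"
    and "is_nbp Z (HV H)"
    and "uniform_read Z (HV H) d"
    and "computes Z (HV H) (\<lambda>S. satisfies S (phi_H H))"
    and "Y1 \<subseteq> Roots H" and "Y2 \<subseteq> Roots H" and "Y1 \<inter> Y2 = {}"
    and "separates Z X Y1 Y2"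
    and "pseudomatching_between H M Y1 Y2"
  shows "\<forall>S. total_assignment (HV H - \<Union>M) S \<longrightarrow>
           (\<exists>\<phi>\<in>CNF_M H M. \<forall>P. computational Z P \<and> X \<subseteq> path_verts Z P \<and> S \<subseteq> A Z P
              \<longrightarrow> satisfies (A Z P) \<phi>)"
proof (intro allI impI)
  note bt = assms(1) and nbp = assms(2) and Y = assms(5-7) and pm = assms(9)
  fix S assume tot: "total_assignment (HV H - \<Union>M) S"
  obtain Ps K where dec: "\<And>P. computational Z P \<Longrightarrow> X \<subseteq> path_verts Z P \<Longrightarrow> decomposes Z Ps Y1 Y2 K P"
    using separator_decomposition[OF nbp assms(3) _ _ assms(8)] Y(1,2) Roots_subset_HV[OF bt] by blast
  show "\<exists>\<phi>\<in>CNF_M H M. \<forall>P. computational Z P \<and> X \<subseteq> path_verts Z P \<and> S \<subseteq> A Z P \<longrightarrow> satisfies (A Z P) \<phi>"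
  proof (rule pseudomatching_clause_choice[OF bt pm Y(3)])
    fix i j P1 P2
    assume "adjacent H i j" "troot H i \<in> Y1" "troot H j \<in> Y2"
      and "computational Z P1 \<and> X \<subseteq> path_verts Z P1 \<and> S \<subseteq> A Z P1"
      and "computational Z P2 \<and> X \<subseteq> path_verts Z P2 \<and> S \<subseteq> A Z P2"
    then show "pos_clause (half_path H i j) \<inter> A Z P1 \<noteq> {} \<or> pos_clause (half_path H j i) \<inter> A Z P2 \<noteq> {}"
      using spliced_path_meets_half_clause[OF bt nbp assms(4) Y pm tot] dec by blast
  qed
qed

end
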